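(* Let $X$ be a hyperbolic approximation of a metric space $Z$, with vertex set $V$. If $v,v'\in V$ are not joined by a radial geodesic, then any branch point of $\{v,v'\}$ is a splitting point.
   Context: Hyperbolic approximation: let $(Z,d)$ be a metric space and fix $r$ with $0<r\le1/6$. For every $k\in\mathbb{Z}$ choose a maximal $r^k$-separated set $V_k\subset Z$ (distinct points at distance $\ge r^k$, maximal with this property). For $v\in V_k$ let $B(v)$ be the ball in $Z$ of radius $2r^k$ centred at $v$, $\bar B(v)$ the closed ball. The vertex set $V$ consists, for each $k$, of the balls $B(v)$, $v\in V_k$ (equal balls from the same level give the same vertex; equal balls at different levels are different vertices); a vertex from level $k$ has level $l(v)=k$, and we write $V_k$ also for the set of vertices of level $k$. Two vertices are joined by an edge iff they are on the same level and their closed balls intersect (horizontal edge), or they are on neighbouring levels $k,k+1$ and the ball of the level-$(k+1)$ vertex is contained in the ball of the level-$k$ vertex (radial edge). $X$ carries the path metric with all edges of length $1$. A radial geodesic is an edge path all of whose edges are radial and along which the level function is monotone. For $V'\subset V$, a vertex $u$ is a cone point of $V'$ if $l(u)\le\inf_{v\in V'}l(v)$ and every $v\in V'$ is connected to $u$ by a radial geodesic; a branch point of $V'$ is a cone point of maximal level. A vertex $v_k\in V_k$ is a splitting point if there is $v_{k+1}\in V_{k+1}$ with $B(v_{k+1})\subsetneq B(v_k)$. *)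

theory Defs
  imports "HOL-Analysis.Analysis"
begin

text \<open>A vertex is a pair (level k, open ball of radius 2 r^k
  about a point of V k); equal balls at the same level are the same vertex.\<close>

definition separated :: "real \<Rightarrow> 'a::metric_space set \<Rightarrow> bool" where
  "separated \<rho> S \<longleftrightarrow> (\<forall>x\<in>S. \<forall>y\<in>S. x \<noteq> y \<longrightarrow> \<rho> \<le> dist x y)"

definition maximal_separated :: "real \<Rightarrow> 'a::metric_space set \<Rightarrow> bool" where
  "maximal_separated \<rho> S \<longleftrightarrow> separated \<rho> S \<and>
     (\<forall>S'. S \<subseteq> S' \<and> separated \<rho> S' \<longrightarrow> S' = S)"

type_synonym 'a hvertex = "int \<times> 'a set"

definition hyp_vertices :: "real \<Rightarrow> (int \<Rightarrow> 'a::metric_space set) \<Rightarrow> 'a hvertex set" where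
  "hyp_vertices r V = {(k, ball v (2 * r powi k)) | k v. v \<in> V k}"

definition level :: "'a hvertex \<Rightarrow> int" where
  "level u = fst u"

definition horizontal_edge :: "real \<Rightarrow> (int \<Rightarrow> 'a::metric_space set) \<Rightarrow> 'a hvertex \<Rightarrow> 'a hvertex \<Rightarrow> bool" where
  "horizontal_edge r V x y \<longleftrightarrow> x \<in> hyp_vertices r V \<and> y \<in> hyp_vertices r V \<and> x \<noteq> y \<and>
     fst x = fst y \<and>
     (\<exists>v w. v \<in> V (fst x) \<and> w \<in> V (fst y) \<and> snd x = ball v (2 * r powi fst x) \<and>
        snd y = ball w (2 * r powi fst y) \<and>
        cball v (2 * r powi fst x) \<inter> cball w (2 * r powi fst y) \<noteq> {})"

definition radial_edge :: "real \<Rightarrow> (int \<Rightarrow> 'a::metric_space set) \<Rightarrow> 'a hvertex \<Rightarrow> 'a hvertex \<Rightarrow> bool" where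
  "radial_edge r V x y \<longleftrightarrow> x \<in> hyp_vertices r V \<and> y \<in> hyp_vertices r V \<and>
     ((fst y = fst x + 1 \<and> snd y \<subseteq> snd x) \<or> (fst x = fst y + 1 \<and> snd x \<subseteq> snd y))"

definition radial_geodesic :: "real \<Rightarrow> (int \<Rightarrow> 'a::metric_space set) \<Rightarrow> 'a hvertex list \<Rightarrow> bool" where
  "radial_geodesic r V ps \<longleftrightarrow> ps \<noteq> [] \<and> set ps \<subseteq> hyp_vertices r V \<and>
     (\<forall>i. Suc i < length ps \<longrightarrow> radial_edge r V (ps ! i) (ps ! Suc i)) \<and>
     (sorted (map level ps) \<or> sorted (rev (map level ps)))"

definition radially_joined :: "real \<Rightarrow> (int \<Rightarrow> 'a::metric_space set) \<Rightarrow> 'a hvertex \<Rightarrow> 'a hvertex \<Rightarrow> bool" where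
  "radially_joined r V u v \<longleftrightarrow> (\<exists>ps. radial_geodesic r V ps \<and> hd ps = u \<and> last ps = v)"

definition cone_point :: "real \<Rightarrow> (int \<Rightarrow> 'a::metric_space set) \<Rightarrow> 'a hvertex set \<Rightarrow> 'a hvertex \<Rightarrow> bool" where
  "cone_point r V V' u \<longleftrightarrow> u \<in> hyp_vertices r V \<and> (\<forall>v\<in>V'. level u \<le> level v) \<and>
     (\<forall>v\<in>V'. radially_joined r V v u)"

definition branch_point :: "real \<Rightarrow> (int \<Rightarrow> 'a::metric_space set) \<Rightarrow> 'a hvertex set \<Rightarrow> 'a hvertex \<Rightarrow> bool" where
  "branch_point r V V' u \<longleftrightarrow> cone_point r V V' u \<and>
     (\<forall>w. cone_point r V V' w \<longrightarrow> level w \<le> level u)"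

definition splitting_point :: "real \<Rightarrow> (int \<Rightarrow> 'a::metric_space set) \<Rightarrow> 'a hvertex \<Rightarrow> bool" where
  "splitting_point r V u \<longleftrightarrow> u \<in> hyp_vertices r V \<and>
     (\<exists>w\<in>hyp_vertices r V. level w = level u + 1 \<and> snd w \<subset> snd u)"

end

theory Submission
  imports Defs
begin

text \<open>Levels change by exactly one along a radial geodesic, monotonically, so a radial
  geodesic from v down to the branch point u reaches u through a vertex w one level deeper
  whose ball lies in that of u. If u were not a splitting point, that ball would equal the
  ball of u, so w would be the vertex (level u + 1, ball of u) for both v and v' alike;
  it would then be a cone point of {v, v'} deeper than u. The degenerate case where v or v'
  lies on the level of u forces it to be u itself, contradicting that v and v' are not
  radially joined.\<close>

lemma radial_edge_levels:
  "radial_edge r V x y \<Longrightarrow> level y = level x + 1 \<or> level x = level y + 1"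
  unfolding radial_edge_def level_def by auto

lemma radial_geodesic_rev:
  assumes "radial_geodesic r V ps"
  shows "radial_geodesic r V (rev ps)"
  unfolding radial_geodesic_def
proof (intro conjI allI impI)
  fix i assume i: "Suc i < length (rev ps)"
  define j where "j = length ps - Suc (Suc i)"
  have "radial_edge r V (ps ! j) (ps ! Suc j)"
    using assms i j_def unfolding radial_geodesic_def by auto
  moreover have "rev ps ! i = ps ! Suc j" "rev ps ! Suc i = ps ! j"
    using i j_def by (auto simp: rev_nth Suc_diff_Suc)
  ultimately show "radial_edge r V (rev ps ! i) (rev ps ! Suc i)"
    unfolding radial_edge_def by auto
qed (use assms in \<open>auto simp: radial_geodesic_def rev_map\<close>)

lemma radially_joined_sym:
  "radially_joined r V a b \<Longrightarrow> radially_joined r V b a"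
  unfolding radially_joined_def by (metis radial_geodesic_rev hd_rev last_rev)

lemma radially_joined_in_vertices:
  "radially_joined r V a b \<Longrightarrow> a \<in> hyp_vertices r V \<and> b \<in> hyp_vertices r V"
  unfolding radially_joined_def radial_geodesic_def by (auto intro: hd_in_set last_in_set)

lemma radial_geodesic_take:
  assumes "radial_geodesic r V ps" and "0 < k"
  shows "radial_geodesic r V (take k ps)"
proof -
  have "sorted (map level (take k ps))" if "sorted (map level ps)"
    using that by (metis sorted_wrt_take take_map)
  moreover have "sorted (rev (map level (take k ps)))" if "sorted (rev (map level ps))"
    using that by (metis rev_take sorted_wrt_drop take_map)
  ultimately show ?thesis
    using assms unfolding radial_geodesic_def by (auto dest: in_set_takeD)
qed

lemma radial_geodesic_level_nth:
  assumes "radial_geodesic r V ps"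
  obtains s :: int where "\<bar>s\<bar> = 1"
    and "\<And>i. i < length ps \<Longrightarrow> level (ps ! i) = level (hd ps) + s * int i"
proof -
  have ne: "ps \<noteq> []" and edges: "\<And>i. Suc i < length ps \<Longrightarrow> radial_edge r V (ps ! i) (ps ! Suc i)"
    using assms unfolding radial_geodesic_def by auto
  have walk: "\<forall>i < length ps. level (ps ! i) = level (hd ps) + s * int i"
    if s: "\<bar>s\<bar> = 1" and dir: "\<And>i. Suc i < length ps \<Longrightarrow> 0 \<le> s * (level (ps ! Suc i) - level (ps ! i))"
    for s :: int
  proof (intro allI impI)
    fix i assume "i < length ps"
    then show "level (ps ! i) = level (hd ps) + s * int i"
    proof (induction i)
      case 0
      then show ?case using ne by (simp add: hd_conv_nth)
    next
      case (Suc i)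
      have "s = 1 \<or> s = -1" using s by arith
      then have "level (ps ! Suc i) = level (ps ! i) + s"
        using radial_edge_levels[OF edges[OF Suc.prems]] dir[OF Suc.prems] by auto
      then show ?case using Suc by (simp add: algebra_simps)
    qed
  qed
  consider "sorted (map level ps)" | "sorted (rev (map level ps))"
    using assms unfolding radial_geodesic_def by blast
  then show thesis
  proof cases
    case 1
    have "0 \<le> 1 * (level (ps ! Suc i) - level (ps ! i))" if "Suc i < length ps" for i
      using sorted_nth_mono[OF 1, of i "Suc i"] that by simp
    then have "\<forall>i < length ps. level (ps ! i) = level (hd ps) + 1 * int i"
      by (intro walk) simp_all
    then show thesis by (intro that[of "1"]) simp_all
  next
    case 2
    have "0 \<le> (-1) * (level (ps ! Suc i) - level (ps ! i))" if "Suc i < length ps" for i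
      using sorted_rev_nth_mono[OF 2, of i "Suc i"] that by simp
    then have "\<forall>i < length ps. level (ps ! i) = level (hd ps) + (-1) * int i"
      by (intro walk) simp_all
    then show thesis by (intro that[of "-1"]) simp_all
  qed
qed

lemma radially_joined_same_level:
  assumes "radially_joined r V v u" and "level v = level u"
  shows "v = u"
proof -
  obtain ps where ps: "radial_geodesic r V ps" "hd ps = v" "last ps = u"
    using assms(1) unfolding radially_joined_def by blast
  obtain s :: int where s: "\<bar>s\<bar> = 1"
    and lev: "\<And>i. i < length ps \<Longrightarrow> level (ps ! i) = level (hd ps) + s * int i"
    using radial_geodesic_level_nth[OF ps(1)] by blast
  have ne: "ps \<noteq> []" using ps(1) by (simp add: radial_geodesic_def)
  then have "level u = level v + s * int (length ps - 1)"
    using lev[of "length ps - 1"] ps by (simp add: last_conv_nth)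
  then have "length ps = 1" using assms(2) s ne by (cases ps) auto
  then show ?thesis using ps by (cases ps) auto
qed

lemma radially_joined_from_above:
  assumes "radially_joined r V v u" and "level u < level v"
  obtains w where "radially_joined r V v w" and "radial_edge r V w u"
    and "level w = level u + 1"
proof -
  obtain ps where ps: "radial_geodesic r V ps" "hd ps = v" "last ps = u"
    using assms(1) unfolding radially_joined_def by blast
  obtain s :: int where s: "\<bar>s\<bar> = 1"
    and lev: "\<And>i. i < length ps \<Longrightarrow> level (ps ! i) = level (hd ps) + s * int i"
    using radial_geodesic_level_nth[OF ps(1)] by blast
  define n where "n = length ps"
  have ne: "ps \<noteq> []" using ps(1) by (simp add: radial_geodesic_def)
  then have last_nth: "u = ps ! (n - 1)" using ps(3) n_def by (simp add: last_conv_nth)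
  have lev_u: "level u = level v + s * int (n - 1)"
    using lev[of "n - 1"] ne ps(2) last_nth n_def by simp
  with assms(2) s have down: "s = -1" and n2: "2 \<le> n"
    by (auto simp: abs_if split: if_splits)
  define w where "w = ps ! (n - 2)"
  have "radial_geodesic r V (take (n - 1) ps)"
    using radial_geodesic_take[OF ps(1)] n2 by simp
  moreover have "hd (take (n - 1) ps) = v" "last (take (n - 1) ps) = w"
    using ps(2) n2 ne n_def w_def by (auto simp: last_conv_nth hd_conv_nth numeral_2_eq_2)
  ultimately have "radially_joined r V v w"
    unfolding radially_joined_def by blast
  moreover have "Suc (n - 2) < length ps" "Suc (n - 2) = n - 1"
    using n2 n_def by auto
  then have "radial_edge r V w u"
    using ps(1) last_nth w_def unfolding radial_geodesic_def by metis
  moreover have "level w = level u + 1"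
    using lev[of "n - 2"] lev_u down n2 n_def ps(2) w_def by (simp add: of_nat_diff)
  ultimately show thesis using that by blast
qed

lemma radial_edge_into_non_splitting:
  assumes "\<not> splitting_point r V u" and "u \<in> hyp_vertices r V"
    and "radial_edge r V w u" and "level w = level u + 1"
  shows "w = (level u + 1, snd u)"
  using assms unfolding splitting_point_def radial_edge_def level_def
  by (auto simp: prod_eq_iff)

theorem lemma3p4:
  fixes r :: real and V :: "int \<Rightarrow> 'a::metric_space set"
    and v v' u :: "'a hvertex"
  assumes "0 < r" and "r \<le> 1/6"
    and "\<And>k. maximal_separated (r powi k) (V k)"
    and "v \<in> hyp_vertices r V" and "v' \<in> hyp_vertices r V"
    and "\<not> radially_joined r V v v'"
    and "branch_point r V {v, v'} u"
  shows "splitting_point r V u"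
proof (rule ccontr)
  assume not_split: "\<not> splitting_point r V u"
  have u: "u \<in> hyp_vertices r V" and "level u \<le> level v" "level u \<le> level v'"
    and joined: "radially_joined r V v u" "radially_joined r V v' u"
    and deepest: "\<And>w. cone_point r V {v, v'} w \<Longrightarrow> level w \<le> level u"
    using assms(7) unfolding branch_point_def cone_point_def by auto
  moreover have "v \<noteq> u" "v' \<noteq> u"
    using assms(6) joined radially_joined_sym by blast+
  ultimately have below: "level u < level v" "level u < level v'"
    using radially_joined_same_level by (metis order_le_less)+
  define w where "w = (level u + 1, snd u)"
  have via_w: "radially_joined r V x w" if x: "radially_joined r V x u" "level u < level x" for x
  proof -
    obtain w' where "radially_joined r V x w'" "radial_edge r V w' u" "level w' = level u + 1"
      using radially_joined_from_above[OF x] .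
    with radial_edge_into_non_splitting[OF not_split u] show ?thesis
      unfolding w_def by simp
  qed
  have "radially_joined r V v w" "radially_joined r V v' w"
    using via_w joined below by auto
  moreover have "w \<in> hyp_vertices r V"
    using calculation radially_joined_in_vertices by blast
  ultimately have "cone_point r V {v, v'} w"
    using below unfolding cone_point_def by (auto simp: w_def level_def)
  then show False
    using deepest[of w] by (simp add: w_def level_def)
qed

end
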